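(* Let $n\ge1$, $m\in\mathbb Z_+^n$, $c_\alpha\in\mathbb C$ for $0\le\alpha\le m$ with $c_m\ne0$ (and $c_\alpha=0$ otherwise), $P(z)=\sum_{0\le\alpha\le m}c_\alpha z^\alpha$, and $X_0=\{\tau\in\mathbb Z^n:\tau\ge0,\ \tau\not\ge m\}$. For $\tau_0\in X_0$, let $f_{\tau_0}:\mathbb Z_+^n\to\mathbb C$ (the discrete Green function) be the solution of $\sum_{0\le\alpha\le m}c_\alpha f(x+\alpha)=0$ ($x\in\mathbb Z_+^n$) with $f(x)=1$ if $x=\tau_0$ and $f(x)=0$ for $x\in X_0\setminus\{\tau_0\}$, and assume that its generating function $F_{\tau_0}(z)=\sum_{x\ge0}f_{\tau_0}(x)/z^{x+I}$ converges in some neighborhood of infinity. Then $F_{\tau_0}$ is rational and $$F_{\tau_0}(z)=\Big(\sum_{\alpha\le m,\ \alpha\not\le\tau_0}c_\alpha z^{\alpha-\tau_0-I}\Big)\Big/P(z).$$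
   Context: $x\le y$ is componentwise; $\tau\not\ge m$ (resp. $\alpha\not\le\tau_0$) means that $\tau\ge m$ (resp. $\alpha\le\tau_0$) fails; $I=(1,\dots,1)$; $z^x=\prod z_k^{x_k}$. *)

theory Defs
  imports "HOL-Analysis.Analysis"
begin

text \<open>Multi-indices are functions 'n \<Rightarrow> nat (finite index type 'n, n = CARD('n) \<ge> 1);
  points are 'n \<Rightarrow> complex. The order on functions is the componentwise one from Main.\<close>

definition mpow :: "('n::finite \<Rightarrow> complex) \<Rightarrow> ('n \<Rightarrow> nat) \<Rightarrow> complex" where
  "mpow z x = (\<Prod>k\<in>UNIV. z k ^ x k)"

definition X0 :: "('n::finite \<Rightarrow> nat) \<Rightarrow> ('n \<Rightarrow> nat) set" where
  "X0 m = {\<tau>. \<not> (m \<le> \<tau>)}"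

definition charpoly :: "(('n::finite \<Rightarrow> nat) \<Rightarrow> complex) \<Rightarrow> ('n \<Rightarrow> nat) \<Rightarrow> ('n \<Rightarrow> complex) \<Rightarrow> complex" where
  "charpoly c m z = (\<Sum>\<alpha>\<in>{\<alpha>. \<alpha> \<le> m}. c \<alpha> * mpow z \<alpha>)"

definition genfun :: "(('n::finite \<Rightarrow> nat) \<Rightarrow> complex) \<Rightarrow> ('n \<Rightarrow> complex) \<Rightarrow> complex" where
  "genfun f z = infsum (\<lambda>x. f x / (\<Prod>k\<in>UNIV. z k ^ (x k + 1))) UNIV"

definition numer :: "(('n::finite \<Rightarrow> nat) \<Rightarrow> complex) \<Rightarrow> ('n \<Rightarrow> nat) \<Rightarrow> ('n \<Rightarrow> nat) \<Rightarrow> ('n \<Rightarrow> complex) \<Rightarrow> complex" where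
  "numer c m \<tau>0 z = (\<Sum>\<alpha>\<in>{\<alpha>. \<alpha> \<le> m \<and> \<not> (\<alpha> \<le> \<tau>0)}.
      c \<alpha> * (\<Prod>k\<in>UNIV. z k powi (int (\<alpha> k) - int (\<tau>0 k) - 1)))"

end

theory Submission
  imports Defs
begin

text \<open>Multiplying \<open>F\<close> by \<open>z^\<alpha>\<close> shifts the series: \<open>z^\<alpha> F(z)\<close> is the series
  \<open>\<Sum>\<^sub>y f(y+\<alpha>) z^(-y-I)\<close> plus the boundary part \<open>z^\<alpha> \<Sum> f(x) z^(-x-I)\<close> over those \<open>x\<close>
  for which \<open>\<alpha> \<le> x\<close> fails. For \<open>\<alpha> \<le> m\<close> all these \<open>x\<close> lie in \<open>X0 m\<close>, where \<open>f\<close> vanishes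
  except at \<open>\<tau>0\<close>, so the boundary part is \<open>z^(\<alpha>-\<tau>0-I)\<close> if \<open>\<alpha> \<le> \<tau>0\<close> fails and \<open>0\<close>
  otherwise. Weighting with \<open>c \<alpha>\<close> and summing over \<open>\<alpha> \<le> m\<close>, the shifted series combine to
  \<open>\<Sum>\<^sub>y (\<Sum>\<^sub>\<alpha> c \<alpha> f(y+\<alpha>)) z^(-y-I)\<close>, which vanishes by the recurrence; what remains is
  \<open>P(z) F(z)\<close> = sum of the boundary parts.\<close>

lemma has_sum_sum:
  fixes f :: "'i \<Rightarrow> 'a \<Rightarrow> 'b::topological_comm_monoid_add"
  assumes "finite I" "\<And>i. i \<in> I \<Longrightarrow> (f i has_sum s i) A"
  shows "((\<lambda>x. \<Sum>i\<in>I. f i x) has_sum (\<Sum>i\<in>I. s i)) A"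
  using assms by (induction I rule: finite_induct) (auto intro: has_sum_add)

lemma finite_le_fun: "finite {\<alpha> :: 'n::finite \<Rightarrow> nat. \<alpha> \<le> m}"
proof (rule finite_subset)
  show "{\<alpha>. \<alpha> \<le> m} \<subseteq> PiE UNIV (\<lambda>k. {..m k})"
    by (auto simp: le_fun_def PiE_def Pi_def)
qed (rule finite_PiE, auto)

lemma has_sum_shift:
  fixes g :: "('n \<Rightarrow> nat) \<Rightarrow> 'a::banach"
  assumes "(g has_sum s) UNIV"
  shows "((\<lambda>y. g (\<lambda>k. y k + \<alpha> k)) has_sum (s - infsum g {x. \<not> \<alpha> \<le> x})) UNIV"
proof -
  let ?shift = "\<lambda>y k. y k + \<alpha> k"
  have "inj ?shift"
    by (auto simp: inj_def fun_eq_iff)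
  have range_shift: "range ?shift = {x. \<alpha> \<le> x}"
  proof (intro equalityI subsetI)
    fix x assume "x \<in> {x. \<alpha> \<le> x}"
    then show "x \<in> range ?shift"
      by (intro image_eqI[of x ?shift "\<lambda>k. x k - \<alpha> k"]) (simp_all add: le_fun_def fun_eq_iff)
  qed (auto simp: le_fun_def)
  have "g summable_on {x. \<not> \<alpha> \<le> x}"
    using has_sum_imp_summable[OF assms] subset_UNIV by (rule summable_on_subset_banach)
  then have "(g has_sum (s - infsum g {x. \<not> \<alpha> \<le> x})) (UNIV - {x. \<not> \<alpha> \<le> x})"
    by (intro has_sum_Diff assms has_sum_infsum subset_UNIV)
  moreover have "UNIV - {x. \<not> \<alpha> \<le> x} = range ?shift"
    unfolding range_shift by blast
  ultimately have "(g has_sum (s - infsum g {x. \<not> \<alpha> \<le> x})) (range ?shift)"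
    by (simp only:)
  then show ?thesis
    by (simp only: has_sum_reindex[OF \<open>inj ?shift\<close>] comp_def)
qed

lemma infsum_not_ge_eq:
  fixes g :: "('n::finite \<Rightarrow> nat) \<Rightarrow> 'a::{comm_monoid_add, t2_space}"
  assumes "\<alpha> \<le> m" and vanish: "\<And>x. x \<in> X0 m - {\<tau>0} \<Longrightarrow> g x = 0"
  shows "infsum g {x. \<not> \<alpha> \<le> x} = (if \<alpha> \<le> \<tau>0 then 0 else g \<tau>0)"
proof -
  have "infsum g {x. \<not> \<alpha> \<le> x} = infsum g ({x. \<not> \<alpha> \<le> x} \<inter> {\<tau>0})"
  proof (rule infsum_cong_neutral)
    fix x assume "x \<in> {x. \<not> \<alpha> \<le> x} - {x. \<not> \<alpha> \<le> x} \<inter> {\<tau>0}"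
    with \<open>\<alpha> \<le> m\<close> have "x \<in> X0 m - {\<tau>0}"
      by (auto simp: X0_def intro: order_trans)
    then show "g x = 0" by (rule vanish)
  qed auto
  then show ?thesis by (cases "\<alpha> \<le> \<tau>0") auto
qed

lemma prod_power_shift:
  "(\<Prod>k\<in>UNIV. z k ^ (y k + \<alpha> k + 1)) = mpow z \<alpha> * (\<Prod>k\<in>UNIV. z k ^ (y k + 1))"
  unfolding mpow_def by (simp add: prod.distrib[symmetric] power_add algebra_simps)

lemma mpow_divide_eq_prod_powi:
  assumes "\<And>k. z k \<noteq> 0"
  shows "mpow z \<alpha> / (\<Prod>k\<in>UNIV. z k ^ (\<tau> k + 1))
         = (\<Prod>k\<in>UNIV. z k powi (int (\<alpha> k) - int (\<tau> k) - 1))"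
  unfolding mpow_def prod_dividef[symmetric]
proof (rule prod.cong[OF refl])
  fix k
  have "z k ^ \<alpha> k / z k ^ (\<tau> k + 1) = z k powi int (\<alpha> k) / z k powi int (\<tau> k + 1)"
    by (simp only: power_int_of_nat)
  also have "\<dots> = z k powi (int (\<alpha> k) - int (\<tau> k + 1))"
    by (rule power_int_diff[symmetric]) (simp add: assms)
  also have "\<dots> = z k powi (int (\<alpha> k) - int (\<tau> k) - 1)"
    by (simp add: algebra_simps)
  finally show "z k ^ \<alpha> k / z k ^ (\<tau> k + 1) = z k powi (int (\<alpha> k) - int (\<tau> k) - 1)" .
qed

lemma mpow_mult_genfun_has_sum:
  fixes f :: "('n::finite \<Rightarrow> nat) \<Rightarrow> complex"
  assumes "\<alpha> \<le> m"
    and init1: "f \<tau>0 = 1"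
    and init0: "\<And>x. x \<in> X0 m - {\<tau>0} \<Longrightarrow> f x = 0"
    and z_nz: "\<And>k. z k \<noteq> 0"
    and summable: "(\<lambda>x. f x / (\<Prod>k\<in>UNIV. z k ^ (x k + 1))) summable_on UNIV"
  shows "((\<lambda>y. f (\<lambda>k. y k + \<alpha> k) / (\<Prod>k\<in>UNIV. z k ^ (y k + 1))) has_sum
           (mpow z \<alpha> * genfun f z
            - (if \<alpha> \<le> \<tau>0 then 0 else \<Prod>k\<in>UNIV. z k powi (int (\<alpha> k) - int (\<tau>0 k) - 1)))) UNIV"
proof -
  define g where "g x = f x / (\<Prod>k\<in>UNIV. z k ^ (x k + 1))" for x
  have "(g has_sum genfun f z) UNIV"
    using summable unfolding g_def genfun_def by (rule has_sum_infsum)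
  from has_sum_cmult_right[OF has_sum_shift[OF this], of "mpow z \<alpha>"]
  have "((\<lambda>y. mpow z \<alpha> * g (\<lambda>k. y k + \<alpha> k)) has_sum
          (mpow z \<alpha> * genfun f z - mpow z \<alpha> * infsum g {x. \<not> \<alpha> \<le> x})) UNIV"
    by (simp add: right_diff_distrib)
  moreover have "mpow z \<alpha> * g (\<lambda>k. y k + \<alpha> k) = f (\<lambda>k. y k + \<alpha> k) / (\<Prod>k\<in>UNIV. z k ^ (y k + 1))"
    for y
  proof -
    have "mpow z \<alpha> \<noteq> 0"
      using z_nz by (simp add: mpow_def)
    then show ?thesis
      unfolding g_def prod_power_shift times_divide_eq_right
      by (rule mult_divide_mult_cancel_left)
  qed
  moreover have "mpow z \<alpha> * infsum g {x. \<not> \<alpha> \<le> x}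
      = (if \<alpha> \<le> \<tau>0 then 0 else \<Prod>k\<in>UNIV. z k powi (int (\<alpha> k) - int (\<tau>0 k) - 1))"
  proof -
    have "infsum g {x. \<not> \<alpha> \<le> x} = (if \<alpha> \<le> \<tau>0 then 0 else g \<tau>0)"
      by (rule infsum_not_ge_eq[OF \<open>\<alpha> \<le> m\<close>]) (use init0 in \<open>simp add: g_def\<close>)
    moreover have "mpow z \<alpha> * g \<tau>0 = (\<Prod>k\<in>UNIV. z k powi (int (\<alpha> k) - int (\<tau>0 k) - 1))"
      unfolding g_def init1 mpow_divide_eq_prod_powi[of z, OF z_nz, symmetric] by simp
    ultimately show ?thesis
      by simp
  qed
  ultimately show ?thesis by simp
qed

lemma charpoly_mult_genfun:
  fixes c f :: "('n::finite \<Rightarrow> nat) \<Rightarrow> complex"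
  assumes rec: "\<And>x. (\<Sum>\<alpha>\<in>{\<alpha>. \<alpha> \<le> m}. c \<alpha> * f (\<lambda>k. x k + \<alpha> k)) = 0"
    and init1: "f \<tau>0 = 1"
    and init0: "\<And>x. x \<in> X0 m - {\<tau>0} \<Longrightarrow> f x = 0"
    and z_nz: "\<And>k. z k \<noteq> 0"
    and summable: "(\<lambda>x. f x / (\<Prod>k\<in>UNIV. z k ^ (x k + 1))) summable_on UNIV"
  shows "charpoly c m z * genfun f z = numer c m \<tau>0 z"
proof -
  let ?S = "{\<alpha>. \<alpha> \<le> m}"
  define w where "w y = (\<Prod>k\<in>UNIV. z k ^ (y k + 1))" for y :: "'n \<Rightarrow> nat"
  define tail where "tail \<alpha> = (if \<alpha> \<le> \<tau>0 then 0 else \<Prod>k\<in>UNIV. z k powi (int (\<alpha> k) - int (\<tau>0 k) - 1))"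
    for \<alpha> :: "'n \<Rightarrow> nat"
  have shifted: "((\<lambda>y. c \<alpha> * (f (\<lambda>k. y k + \<alpha> k) / w y)) has_sum
                   c \<alpha> * (mpow z \<alpha> * genfun f z - tail \<alpha>)) UNIV" if "\<alpha> \<in> ?S" for \<alpha>
    unfolding w_def tail_def
    by (intro has_sum_cmult_right mpow_mult_genfun_has_sum[OF _ init1 init0 z_nz summable])
      (use that in simp)
  have vanish: "(\<lambda>y. \<Sum>\<alpha>\<in>?S. c \<alpha> * (f (\<lambda>k. y k + \<alpha> k) / w y)) = (\<lambda>y. 0)"
  proof
    fix y
    show "(\<Sum>\<alpha>\<in>?S. c \<alpha> * (f (\<lambda>k. y k + \<alpha> k) / w y)) = 0"
      unfolding times_divide_eq_right sum_divide_distrib[symmetric] rec by simp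
  qed
  have "((\<lambda>y. \<Sum>\<alpha>\<in>?S. c \<alpha> * (f (\<lambda>k. y k + \<alpha> k) / w y)) has_sum
          (\<Sum>\<alpha>\<in>?S. c \<alpha> * (mpow z \<alpha> * genfun f z - tail \<alpha>))) UNIV"
    using finite_le_fun shifted by (rule has_sum_sum)
  then have "((\<lambda>_ :: 'n \<Rightarrow> nat. 0) has_sum (\<Sum>\<alpha>\<in>?S. c \<alpha> * (mpow z \<alpha> * genfun f z - tail \<alpha>))) UNIV"
    unfolding vanish .
  then have "(\<Sum>\<alpha>\<in>?S. c \<alpha> * (mpow z \<alpha> * genfun f z - tail \<alpha>)) = 0"
    using has_sum_0_simp by (rule has_sum_unique)
  moreover have "numer c m \<tau>0 z = (\<Sum>\<alpha>\<in>?S. c \<alpha> * tail \<alpha>)"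
    unfolding numer_def tail_def
    by (rule sum.mono_neutral_cong_left) (auto simp: finite_le_fun)
  ultimately show ?thesis
    unfolding charpoly_def sum_distrib_right right_diff_distrib sum_subtractf mult.assoc
    by simp
qed

theorem proposition1:
  fixes m :: "'n::finite \<Rightarrow> nat"
    and c :: "('n \<Rightarrow> nat) \<Rightarrow> complex"
    and f :: "('n \<Rightarrow> nat) \<Rightarrow> complex"
    and \<tau>0 :: "'n \<Rightarrow> nat"
    and R :: real
  assumes cm: "c m \<noteq> 0"
    and c_zero: "\<And>\<alpha>. \<not> (\<alpha> \<le> m) \<Longrightarrow> c \<alpha> = 0"
    and tau0: "\<tau>0 \<in> X0 m"
    and rec: "\<And>x. (\<Sum>\<alpha>\<in>{\<alpha>. \<alpha> \<le> m}. c \<alpha> * f (\<lambda>k. x k + \<alpha> k)) = 0"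
    and init1: "f \<tau>0 = 1"
    and init0: "\<And>x. x \<in> X0 m - {\<tau>0} \<Longrightarrow> f x = 0"
    and R_pos: "R > 0"
    and conv: "\<And>z. (\<forall>k. R < norm (z k)) \<Longrightarrow>
                 (\<lambda>x. f x / (\<Prod>k\<in>UNIV. z k ^ (x k + 1))) summable_on UNIV"
  shows "(\<forall>z. (\<forall>k. R < norm (z k)) \<longrightarrow> charpoly c m z * genfun f z = numer c m \<tau>0 z)
       \<and> (\<forall>z. (\<forall>k. R < norm (z k)) \<and> charpoly c m z \<noteq> 0 \<longrightarrow>
              genfun f z = numer c m \<tau>0 z / charpoly c m z)"
proof -
  have "charpoly c m z * genfun f z = numer c m \<tau>0 z" if "\<forall>k. R < norm (z k)" for z
  proof (rule charpoly_mult_genfun[OF rec init1 init0])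
    show "z k \<noteq> 0" for k
      using that R_pos by (metis norm_zero order.strict_trans order.irrefl)
    show "(\<lambda>x. f x / (\<Prod>k\<in>UNIV. z k ^ (x k + 1))) summable_on UNIV"
      using that by (rule conv)
  qed
  then show ?thesis
    by (auto simp: field_simps)
qed

end
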